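(* Let $n\ge3$ be odd. Then the slope of the right-most edge of the Newton polygon of $R_{(n,2)}(x)$ with respect to the prime $3$ is strictly less than $\frac12$ if $3\mid n+1$, and is equal to $\frac12$ if $3\nmid n+1$.
   Context: $\mathrm{He}_k(x)$ denotes the monic probabilists' Hermite polynomial of degree $k$. $\mathrm{He}_{(n,2)}(x)=\mathrm{Wr}[\mathrm{He}_2,\mathrm{He}_{n+1}]/(n-1)$ (the Wronskian Hermite polynomial of the partition $(n,2)$, whose degree sequence is $(2,n+1)$), a monic integer polynomial of degree $n+2$. For $n$ odd, $\mathrm{He}_{(n,2)}(x)=x\,R_{(n,2)}(x)$ with $R_{(n,2)}\in\mathbb{Z}[x]$, $R_{(n,2)}(0)\ne0$. For $G(x)=\sum_{i=0}^N a_ix^i\in\mathbb{Z}[x]$ with $a_0\neq0$ and a prime $p$, the Newton polygon of $G$ with respect to $p$ is the lower convex hull of the points $(i,\nu_p(a_{N-i}))$, $0\le i\le N$, $a_{N-i}\ne0$ ($\nu_p$ the $p$-adic valuation); its right-most edge is the edge ending at $(N,\nu_p(a_0))$. *)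

theory Defs
  imports "HOL-Computational_Algebra.Computational_Algebra"
begin

fun hermite_He :: "nat \<Rightarrow> int poly" where
  "hermite_He 0 = 1"
| "hermite_He (Suc 0) = [:0, 1:]"
| "hermite_He (Suc (Suc k)) = [:0, 1:] * hermite_He (Suc k) - smult (int (Suc k)) (hermite_He k)"

definition wronskian2 :: "int poly \<Rightarrow> int poly \<Rightarrow> int poly" where
  "wronskian2 f g = f * pderiv g - pderiv f * g"

text \<open>He_(n,2) = Wr[He_2, He_(n+1)] / (n-1) (coefficientwise exact division).\<close>
definition He_n2 :: "nat \<Rightarrow> int poly" where
  "He_n2 n = map_poly (\<lambda>c. c div int (n - 1)) (wronskian2 (hermite_He 2) (hermite_He (n + 1)))"

definition R_n2 :: "nat \<Rightarrow> int poly" where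
  "R_n2 n = He_n2 n div [:0, 1:]"

definition newton_points :: "int \<Rightarrow> int poly \<Rightarrow> (real \<times> real) set" where
  "newton_points p G = {(real (degree G - j), real (multiplicity p (coeff G j))) | j.
      j \<le> degree G \<and> coeff G j \<noteq> 0}"

text \<open>Slope of the right-most edge of the Newton polygon (lower convex hull of the points),
  i.e. the edge ending at (N, nu_p(a_0)): it is the largest slope of a segment joining
  another point of the polygon to (N, nu_p(a_0)).\<close>
definition right_edge_slope :: "int \<Rightarrow> int poly \<Rightarrow> real" where
  "right_edge_slope p G =
     Max {(real (multiplicity p (coeff G 0)) - y) / (real (degree G) - x) | x y.
            (x, y) \<in> newton_points p G \<and> x < real (degree G)}"

end

(* For n = 2m+1, the identity
     Wr[He_2, He_(k+3)] = (k+1) (x^2 He_(k+2) + x He_(k+1) + (k+3) He_k)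
   shows that the division by n-1 defining He_(n,2) is exact, and together with the explicit
   coefficients of the Hermite polynomials it makes R_(n,2) explicit: its odd coefficients vanish,
   its degree is 2m+2, and for a + i = m+1 its coefficient a_(2i) satisfies
     2m a_(2i) a! (2i+1)! 2^a = (-1)^a 2 (2m+2)! (2i^2 - 2i + m).
   Comparing 3-adic valuations with those of a_0 and using Legendre's bound v_3((2i+1)!) <= i gives
   v_3(a_0) - v_3(a_(2i)) <= i - v_3(m+1), with equality for i = 1. So every segment from a point
   of the Newton polygon to its right end point has slope at most 1/2 - v_3(m+1)/(2i), and the one
   from the point of a_2 has slope 1/2 - v_3(m+1)/2. As 3 divides n+1 = 2(m+1) exactly when it
   divides m+1, the right-most edge has slope < 1/2 or exactly 1/2 accordingly. *)

theory Submission
  imports Defs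
begin

section \<open>Hermite polynomials\<close>

lemma coeff_hermite_He_parity: "odd (k + j) \<Longrightarrow> coeff (hermite_He k) j = 0"
  by (induction k arbitrary: j rule: hermite_He.induct) (auto simp: coeff_pCons odd_pos split: nat.split)

lemma coeff_hermite_He_above_degree: "k < j \<Longrightarrow> coeff (hermite_He k) j = 0"
  by (induction k arbitrary: j rule: hermite_He.induct) (auto simp: coeff_pCons split: nat.split)

lemma pderiv_hermite_He: "pderiv (hermite_He (Suc k)) = smult (int (Suc k)) (hermite_He k)"
proof (induction k rule: hermite_He.induct)
  case 1
  then show ?case by (simp add: pderiv_pCons)
next
  case 2
  then show ?case by (simp add: pderiv_pCons pderiv_mult pderiv_diff)
next
  case (3 k)
  let ?H = hermite_He
  have "pderiv (?H (Suc (Suc (Suc k))))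
      = ?H (Suc (Suc k)) + [:0, 1:] * pderiv (?H (Suc (Suc k))) - smult (int (Suc (Suc k))) (pderiv (?H (Suc k)))"
    by (simp only: hermite_He.simps pderiv_mult pderiv_smult pderiv_diff pderiv_pCons) simp
  also have "\<dots> = ?H (Suc (Suc k)) + smult (int (Suc (Suc k))) ([:0, 1:] * ?H (Suc k) - smult (int (Suc k)) (?H k))"
    unfolding 3 by (simp add: algebra_simps smult_diff_right)
  also have "\<dots> = smult (int (Suc (Suc (Suc k)))) (?H (Suc (Suc k)))"
    by (simp only: hermite_He.simps(3)[symmetric] of_nat_Suc[of "Suc (Suc k)"] smult_add_left smult_1_left)
  finally show ?case .
qed

lemma coeff_hermite_He_Suc_Suc:
  "coeff (hermite_He (Suc (Suc k))) 0 = - int (Suc k) * coeff (hermite_He k) 0"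
  "coeff (hermite_He (Suc (Suc k))) (Suc j) = coeff (hermite_He (Suc k)) j - int (Suc k) * coeff (hermite_He k) (Suc j)"
  by (simp_all del: of_nat_Suc)

lemma coeff_hermite_He_eq_1: "coeff (hermite_He k) k = 1"
  by (induction k rule: hermite_He.induct) (simp_all add: coeff_hermite_He_above_degree)

lemma coeff_hermite_He_mult_fact:
  "coeff (hermite_He (r + 2 * t)) r * (fact t * fact r * 2 ^ t) = (-1) ^ t * fact (r + 2 * t)"
proof (induction t arbitrary: r)
  case 0
  then show ?case by (simp add: coeff_hermite_He_eq_1)
next
  case (Suc s)
  let ?c = "\<lambda>r t. coeff (hermite_He (r + 2 * t)) r"
  note IH_s = Suc.IH
  show ?case
  proof (induction r)
    case 0
    have "?c 0 (Suc s) = - int (2 * s + 1) * ?c 0 s"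
      using coeff_hermite_He_Suc_Suc(1)[of "2 * s"] by simp
    then have "?c 0 (Suc s) * (fact (Suc s) * fact 0 * 2 ^ Suc s)
        = - int (2 * s + 1) * int (2 * s + 2) * (?c 0 s * (fact s * fact 0 * 2 ^ s))"
      by (simp add: algebra_simps)
    also have "\<dots> = (-1) ^ Suc s * fact (0 + 2 * Suc s)"
      unfolding IH_s by (simp add: algebra_simps)
    finally show ?case .
  next
    case (Suc r)
    have "?c (Suc r) (Suc s) = ?c r (Suc s) - int (r + 2 * s + 2) * ?c (Suc r) s"
      using coeff_hermite_He_Suc_Suc(2)[of "r + 2 * s + 1" r] by (simp add: algebra_simps)
    then have "?c (Suc r) (Suc s) * (fact (Suc s) * fact (Suc r) * 2 ^ Suc s)
        = int (Suc r) * (?c r (Suc s) * (fact (Suc s) * fact r * 2 ^ Suc s))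
          - int (r + 2 * s + 2) * int (2 * s + 2) * (?c (Suc r) s * (fact s * fact (Suc r) * 2 ^ s))"
      by (simp add: algebra_simps)
    also have "\<dots> = (-1) ^ Suc s * fact (Suc r + 2 * Suc s)"
      unfolding IH_s Suc.IH by (simp add: algebra_simps)
    finally show ?case .
  qed
qed

section \<open>The coefficients of \<open>R_(n,2)\<close>\<close>

lemma wronskian2_hermite_He_2: "wronskian2 (hermite_He 2) H = [:-1, 0, 1:] * pderiv H - [:0, 2:] * H"
proof -
  have "hermite_He 2 = [:-1, 0, 1:]"
    by (simp add: numeral_2_eq_2)
  then show ?thesis
    unfolding wronskian2_def by (simp add: pderiv_pCons)
qed

lemma coeff_wronskian2_hermite_He_2:
  "coeff (wronskian2 (hermite_He 2) H) 0 = - coeff H 1"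
  "coeff (wronskian2 (hermite_He 2) H) (Suc j) = (int j - 2) * coeff H j - (int j + 2) * coeff H (j + 2)"
  unfolding wronskian2_hermite_He_2
  by (cases j) (simp_all add: coeff_pderiv algebra_simps coeff_mult_0 coeff_pCons split: nat.split)

lemma wronskian2_hermite_He_2_hermite_He:
  "wronskian2 (hermite_He 2) (hermite_He (k + 3)) = smult (int k + 1)
     ([:0, 0, 1:] * hermite_He (k + 2) + [:0, 1:] * hermite_He (k + 1) + smult (int k + 3) (hermite_He k))"
proof -
  define X :: "int poly" where "X = [:0, 1:]"
  define K :: "int poly" where "K = [:int k:]"
  define A B C D where "A = hermite_He k" "B = hermite_He (k + 1)" "C = hermite_He (k + 2)" "D = hermite_He (k + 3)"
  have C: "C = X * B - smult (int k + 1) A" and D: "D = X * C - smult (int k + 2) B"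
    unfolding A_B_C_D_def X_def by (simp_all add: numeral_3_eq_3 numeral_2_eq_2 add.commute)
  have D': "pderiv D = smult (int k + 3) C"
    using pderiv_hermite_He[of "k + 2"] unfolding A_B_C_D_def by (simp add: numeral_3_eq_3 add.commute)
  have X: "[:-1, 0, 1:] = X * X - 1" "[:0, 2:] = 2 * X" "[:0, 0, 1:] = X * X"
    unfolding X_def by (simp_all add: one_pCons numeral_poly)
  have const: "smult (int k + c) p = (K + of_int c) * p" for c p
    unfolding K_def by (simp add: of_int_poly smult_add_left)
  show ?thesis
    unfolding wronskian2_hermite_He_2 A_B_C_D_def[symmetric] D' X
    unfolding X_def[symmetric] D
    unfolding C const of_int_numeral of_int_1
    by algebra
qed

lemma map_poly_div_smult: "(d :: int) \<noteq> 0 \<Longrightarrow> map_poly (\<lambda>c. c div d) (smult d p) = p"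
  by (rule poly_eqI) (simp add: coeff_map_poly)

lemma smult_He_n2:
  assumes "n \<ge> 2"
  shows "smult (int (n - 1)) (He_n2 n) = wronskian2 (hermite_He 2) (hermite_He (n + 1))"
proof -
  obtain k where k: "n = k + 2"
    using assms by (metis add.commute le_Suc_ex)
  then have "n + 1 = k + 3" "int (n - 1) = int k + 1" and k1: "int k + 1 \<noteq> 0"
    by simp_all
  then show ?thesis
    unfolding He_n2_def by (simp only: wronskian2_hermite_He_2_hermite_He map_poly_div_smult[OF k1])
qed

lemma coeff_div_X:
  fixes p :: "'a :: idom_divide poly"
  assumes "coeff p 0 = 0"
  shows "coeff (p div [:0, 1:]) j = coeff p (Suc j)"
proof (cases p rule: pCons_cases)
  case (pCons a q)
  with assms have "p = [:0, 1:] * q"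
    by simp
  then have "p div [:0, 1:] = q"
    by (metis nonzero_mult_div_cancel_left one_neq_zero pCons_eq_0_iff)
  with pCons show ?thesis
    by simp
qed

lemma coeff_R_n2:
  assumes "n \<ge> 2" "odd n"
  shows "int (n - 1) * coeff (R_n2 n) j
    = (int j - 2) * coeff (hermite_He (n + 1)) j - (int j + 2) * coeff (hermite_He (n + 1)) (j + 2)"
proof -
  have coeff_He_n2: "int (n - 1) * coeff (He_n2 n) i = coeff (wronskian2 (hermite_He 2) (hermite_He (n + 1))) i" for i
    using arg_cong[OF smult_He_n2[OF assms(1)], of "\<lambda>p. coeff p i"] by simp
  have "coeff (hermite_He (n + 1)) 1 = 0"
    using assms(2) by (intro coeff_hermite_He_parity) simp
  then have He_n2_0: "coeff (He_n2 n) 0 = 0"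
    using coeff_He_n2[of 0] assms(1) by (simp add: coeff_wronskian2_hermite_He_2)
  show ?thesis
    unfolding R_n2_def coeff_div_X[OF He_n2_0] coeff_He_n2 coeff_wronskian2_hermite_He_2 ..
qed

lemma coeff_R_n2_mult_fact:
  assumes m: "m \<ge> 1" and ai: "m + 1 = a + i"
  shows "int (2 * m) * coeff (R_n2 (2 * m + 1)) (2 * i) * (fact a * fact (2 * i + 1) * 2 ^ a)
       = (-1) ^ a * 2 * fact (2 * m + 2) * (2 * int i ^ 2 - 2 * int i + int m)"
proof -
  define h where "h = coeff (hermite_He (2 * m + 2))"
  have R: "int (2 * m) * coeff (R_n2 (2 * m + 1)) (2 * i) = (2 * int i - 2) * h (2 * i) - (2 * int i + 2) * h (2 * i + 2)"
    using coeff_R_n2[of "2 * m + 1" "2 * i"] m unfolding h_def by (simp add: add.commute)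
  have "2 * i + 2 * a = 2 * m + 2"
    using ai by simp
  then have coeff_2i: "h (2 * i) * (fact a * fact (2 * i) * 2 ^ a) = (-1) ^ a * fact (2 * m + 2)"
    using coeff_hermite_He_mult_fact[of "2 * i" a] unfolding h_def by simp
  have coeff_2i_2: "(2 * int i + 2) * h (2 * i + 2) * (fact a * fact (2 * i + 1) * 2 ^ a) = - 2 * int a * ((-1) ^ a * fact (2 * m + 2))"
  proof (cases a)
    case 0
    then have "h (2 * i + 2) = 0"
      unfolding h_def using ai by (intro coeff_hermite_He_above_degree) simp
    then show ?thesis
      using 0 by simp
  next
    case (Suc b)
    have "2 * i + 2 + 2 * b = 2 * m + 2"
      using ai Suc by simp
    then have hb: "h (2 * i + 2) * (fact b * fact (2 * i + 2) * 2 ^ b) = (-1) ^ b * fact (2 * m + 2)"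
      using coeff_hermite_He_mult_fact[of "2 * i + 2" b] unfolding h_def by simp
    have "(2 * int i + 2) * h (2 * i + 2) * (fact a * fact (2 * i + 1) * 2 ^ a)
        = 2 * int a * (h (2 * i + 2) * (fact b * fact (2 * i + 2) * 2 ^ b))"
      by (simp add: Suc algebra_simps)
    also have "\<dots> = - 2 * int a * ((-1) ^ a * fact (2 * m + 2))"
      unfolding hb Suc by (simp add: algebra_simps)
    finally show ?thesis .
  qed
  have "fact (2 * i + 1) = (2 * int i + 1) * (fact (2 * i) :: int)"
    by (simp add: algebra_simps)
  then have "int (2 * m) * coeff (R_n2 (2 * m + 1)) (2 * i) * (fact a * fact (2 * i + 1) * 2 ^ a)
      = (2 * int i - 2) * (2 * int i + 1) * (h (2 * i) * (fact a * fact (2 * i) * 2 ^ a))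
        - (2 * int i + 2) * h (2 * i + 2) * (fact a * fact (2 * i + 1) * 2 ^ a)"
    unfolding R by (simp add: algebra_simps)
  also have "\<dots> = (-1) ^ a * fact (2 * m + 2) * ((2 * int i - 2) * (2 * int i + 1) + 2 * int a)"
    unfolding coeff_2i coeff_2i_2 by (simp add: algebra_simps)
  also have "(2 * int i - 2) * (2 * int i + 1) + 2 * int a = 2 * (2 * int i ^ 2 - 2 * int i + int m)"
    using arg_cong[OF ai, of int] by (simp add: algebra_simps power2_eq_square)
  finally show ?thesis
    by simp
qed

lemma coeff_R_n2_eq_0:
  assumes "odd n" "n \<ge> 3" and "odd j \<or> n + 1 < j"
  shows "coeff (R_n2 n) j = 0"
proof -
  have "coeff (hermite_He (n + 1)) j = 0" "coeff (hermite_He (n + 1)) (j + 2) = 0"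
    using assms by (auto intro: coeff_hermite_He_parity coeff_hermite_He_above_degree)
  then show ?thesis
    using coeff_R_n2[of n j] assms by simp
qed

lemma quadratic_factor_pos:
  fixes i m :: nat
  assumes "m \<ge> 1"
  shows "0 < 2 * int i ^ 2 - 2 * int i + int m"
proof -
  have "int i \<le> int i * int i"
    using le_square[of i] by (metis of_nat_le_iff of_nat_mult)
  then show ?thesis
    using assms by (simp add: power2_eq_square)
qed

lemma coeff_R_n2_even_neq_0:
  assumes "m \<ge> 1" "i \<le> m + 1"
  shows "coeff (R_n2 (2 * m + 1)) (2 * i) \<noteq> 0"
  using coeff_R_n2_mult_fact[of m "m + 1 - i" i] quadratic_factor_pos[OF assms(1), of i] assms by auto

lemma degree_R_n2:
  assumes "m \<ge> 1"
  shows "degree (R_n2 (2 * m + 1)) = 2 * m + 2"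
proof (rule antisym)
  show "degree (R_n2 (2 * m + 1)) \<le> 2 * m + 2"
    using assms by (intro degree_le) (simp add: coeff_R_n2_eq_0)
  show "2 * m + 2 \<le> degree (R_n2 (2 * m + 1))"
    using coeff_R_n2_even_neq_0[OF assms, of "m + 1"] by (auto intro: le_degree)
qed

section \<open>3-adic valuations\<close>

lemma multiplicity_fact_Suc:
  assumes "prime (p :: int)"
  shows "multiplicity p (fact (Suc k) :: int) = multiplicity p (int (Suc k)) + multiplicity p (fact k :: int)"
  using prime_elem_multiplicity_mult_distrib[OF prime_imp_prime_elem[OF assms], of "int (Suc k)" "fact k"]
  by (simp del: of_nat_Suc)

lemma multiplicity_fact_rec:
  fixes p :: nat
  assumes p: "prime p"
  shows "multiplicity (int p) (fact k :: int) = k div p + multiplicity (int p) (fact (k div p) :: int)"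
proof (induction k)
  case 0
  then show ?case by simp
next
  case (Suc k)
  have pi: "prime (int p)"
    using p by simp
  note fact_Suc = multiplicity_fact_Suc[OF pi]
  show ?case
  proof (cases "p dvd Suc k")
    case False
    then have "multiplicity (int p) (int (Suc k)) = 0"
      by (intro not_dvd_imp_multiplicity_0) (simp del: of_nat_Suc)
    moreover have "Suc k div p = k div p"
      using False by (simp add: div_Suc dvd_eq_mod_eq_0)
    ultimately show ?thesis
      using fact_Suc[of k] Suc.IH by simp
  next
    case True
    then obtain q where q: "Suc k = p * Suc q"
      by (metis dvd_def mult_0_right not0_implies_Suc nat.distinct(1))
    have "multiplicity (int p) (int (Suc k)) = Suc (multiplicity (int p) (int (Suc q)))"
      unfolding q of_nat_mult using pi by (intro multiplicity_times_same) (auto simp: prime_gt_0_nat)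
    moreover have "Suc k div p = Suc q"
      using q p prime_gt_0_nat by simp
    moreover have "Suc k div p = Suc (k div p)"
      using True by (simp add: div_Suc dvd_eq_mod_eq_0)
    ultimately show ?thesis
      using fact_Suc[of k] fact_Suc[of q] Suc.IH by simp
  qed
qed

lemma multiplicity_fact_less:
  fixes p :: nat
  assumes p: "prime p" and k: "k \<ge> 1"
  shows "(p - 1) * multiplicity (int p) (fact k :: int) < k"
  using k
proof (induction k rule: less_induct)
  case (less k)
  show ?case
  proof (cases "k div p = 0")
    case True
    then show ?thesis
      using multiplicity_fact_rec[OF p, of k] less.prems by simp
  next
    case False
    have "k div p < k"
      using less.prems prime_gt_1_nat[OF p] by simp
    then have "(p - 1) * multiplicity (int p) (fact (k div p) :: int) < k div p"
      using less.IH False by simp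
    then have "(p - 1) * multiplicity (int p) (fact k :: int) < (p - 1) * (k div p) + k div p"
      unfolding multiplicity_fact_rec[OF p, of k] by (simp add: algebra_simps)
    also have "\<dots> = p * (k div p)"
      using prime_gt_0_nat[OF p] by (cases p) simp_all
    also have "\<dots> \<le> k"
      by (rule times_div_less_eq_dividend)
    finally show ?thesis .
  qed
qed

lemma multiplicity_3_coeff_R_n2:
  assumes m: "m \<ge> 1" and ai: "m + 1 = a + i"
  shows "multiplicity 3 (coeff (R_n2 (2 * m + 1)) (2 * i)) + multiplicity 3 (int m)
      + multiplicity 3 (fact a :: int) + multiplicity 3 (fact (2 * i + 1) :: int)
    = multiplicity 3 (fact (2 * m + 2) :: int) + multiplicity (3 :: int) (2 * int i ^ 2 - 2 * int i + int m)"
proof -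
  define c where "c = coeff (R_n2 (2 * m + 1)) (2 * i)"
  define q where "q = 2 * int i ^ 2 - 2 * int i + int m"
  have "c \<noteq> 0" "q \<noteq> 0"
    using coeff_R_n2_even_neq_0[OF m, of i] quadratic_factor_pos[OF m, of i] ai unfolding c_def q_def by auto
  have v_mult: "multiplicity (3 :: int) (x * y) = multiplicity 3 x + multiplicity 3 y" if "x \<noteq> 0" "y \<noteq> 0" for x y
    using that by (intro prime_elem_multiplicity_mult_distrib) simp_all
  have v_pow2: "multiplicity (3 :: int) (2 ^ k * x) = multiplicity 3 x" for k x
    by (rule multiplicity_prime_elem_times_other) (use prime_dvd_power[of "3 :: int" 2 k] in auto)
  have v_sign: "multiplicity (3 :: int) ((-1) ^ k * x) = multiplicity 3 x" for k x
    by (rule multiplicity_times_unit_right) simp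
  have "2 ^ Suc a * (int m * c * fact a * fact (2 * i + 1)) = (-1) ^ a * (2 ^ 1 * (fact (2 * m + 2) * q))"
    using coeff_R_n2_mult_fact[OF m ai] unfolding c_def q_def by (simp add: algebra_simps)
  then have "multiplicity 3 (int m * c * fact a * fact (2 * i + 1)) = multiplicity (3 :: int) (fact (2 * m + 2) * q)"
    by (metis v_pow2 v_sign)
  then show ?thesis
    using m \<open>c \<noteq> 0\<close> \<open>q \<noteq> 0\<close> unfolding c_def[symmetric] q_def[symmetric] by (simp add: v_mult)
qed

lemma multiplicity_3_coeff_R_n2_0:
  assumes "m \<ge> 1"
  shows "multiplicity 3 (coeff (R_n2 (2 * m + 1)) 0) + multiplicity 3 (fact (m + 1) :: int)
    = multiplicity 3 (fact (2 * m + 2) :: int)"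
  using multiplicity_3_coeff_R_n2[OF assms, of "m + 1" 0] by simp

lemma multiplicity_3_coeff_R_n2_0_eq:
  assumes "m \<ge> 1"
  shows "multiplicity 3 (coeff (R_n2 (2 * m + 1)) 0) + multiplicity (3 :: int) (int m + 1)
    = multiplicity 3 (coeff (R_n2 (2 * m + 1)) 2) + 1"
proof -
  have "multiplicity (3 :: int) 3 = 1"
    by (rule multiplicity_prime) simp
  moreover have "multiplicity (3 :: int) 2 = 0"
    by (rule not_dvd_imp_multiplicity_0) simp
  ultimately have "multiplicity 3 (fact 3 :: int) = 1"
    using multiplicity_fact_Suc[of 3 2] by (simp add: fact_numeral)
  then have "multiplicity 3 (coeff (R_n2 (2 * m + 1)) 2) + multiplicity 3 (fact m :: int) + 1
      = multiplicity 3 (fact (2 * m + 2) :: int)"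
    using multiplicity_3_coeff_R_n2[OF assms, of m 1] by simp
  then show ?thesis
    using multiplicity_3_coeff_R_n2_0[OF assms] multiplicity_fact_Suc[of 3 m] by (simp add: add.commute)
qed

lemma multiplicity_3_coeff_R_n2_0_diff_le:
  assumes m: "m \<ge> 1" and i: "1 \<le> i" "i \<le> m + 1"
  shows "int (multiplicity 3 (coeff (R_n2 (2 * m + 1)) 0)) - int (multiplicity 3 (coeff (R_n2 (2 * m + 1)) (2 * i)))
    \<le> int i - int (multiplicity (3 :: int) (int m + 1))"
proof -
  let ?v = "multiplicity (3 :: int)"
  define a where "a = m + 1 - i"
  have ai: "m + 1 = a + i"
    using i unfolding a_def by simp
  have fact_bound: "?v (fact (2 * i + 1)) \<le> i"
    using multiplicity_fact_less[of 3 "2 * i + 1"] by simp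
  have "?v (int m) + ?v (fact a) \<le> ?v (2 * int i ^ 2 - 2 * int i + int m) + ?v (fact m)"
  proof (cases "i = 1")
    case True
    then show ?thesis
      using ai by simp
  next
    case False
    then have "a \<le> m - 1"
      using i unfolding a_def by simp
    then have "?v (fact a) \<le> ?v (fact (m - 1))"
      by (intro dvd_imp_multiplicity_le fact_dvd) simp_all
    moreover have "?v (fact m) = ?v (int m) + ?v (fact (m - 1))"
      using multiplicity_fact_Suc[of 3 "m - 1"] m by simp
    ultimately show ?thesis
      by simp
  qed
  then show ?thesis
    using multiplicity_3_coeff_R_n2[OF m ai] multiplicity_3_coeff_R_n2_0[OF m] multiplicity_fact_Suc[of 3 m]
      fact_bound by (simp add: add.commute)
qed

section \<open>The right-most edge of the Newton polygon\<close>

definition newton_slope :: "int \<Rightarrow> int poly \<Rightarrow> nat \<Rightarrow> real" where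
  "newton_slope p G j = (real (multiplicity p (coeff G 0)) - real (multiplicity p (coeff G j))) / real j"

lemma right_edge_slope_eq_Max:
  "right_edge_slope p G = Max (newton_slope p G ` {j. 0 < j \<and> j \<le> degree G \<and> coeff G j \<noteq> 0})"
proof -
  have "{(real (multiplicity p (coeff G 0)) - y) / (real (degree G) - x) | x y.
          (x, y) \<in> newton_points p G \<and> x < real (degree G)}
      = newton_slope p G ` {j. 0 < j \<and> j \<le> degree G \<and> coeff G j \<noteq> 0}" (is "?S = _")
  proof
    show "?S \<subseteq> newton_slope p G ` {j. 0 < j \<and> j \<le> degree G \<and> coeff G j \<noteq> 0}"
      unfolding newton_points_def newton_slope_def by (auto simp: of_nat_diff)
    show "newton_slope p G ` {j. 0 < j \<and> j \<le> degree G \<and> coeff G j \<noteq> 0} \<subseteq> ?S"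
    proof (rule image_subsetI)
      fix j
      assume j: "j \<in> {j. 0 < j \<and> j \<le> degree G \<and> coeff G j \<noteq> 0}"
      then have "(real (degree G - j), real (multiplicity p (coeff G j))) \<in> newton_points p G"
        unfolding newton_points_def by blast
      moreover have "real (degree G - j) < real (degree G)" "real (degree G) - real (degree G - j) = real j"
        using j by (simp_all add: of_nat_diff)
      ultimately show "newton_slope p G j \<in> ?S"
        unfolding newton_slope_def by force
    qed
  qed
  then show ?thesis
    unfolding right_edge_slope_def by simp
qed

lemma right_edge_slope_less:
  assumes "degree G > 0"
    and "\<And>j. 0 < j \<Longrightarrow> j \<le> degree G \<Longrightarrow> coeff G j \<noteq> 0 \<Longrightarrow> newton_slope p G j < c"
  shows "right_edge_slope p G < c"
proof -
  have "degree G \<in> {j. 0 < j \<and> j \<le> degree G \<and> coeff G j \<noteq> 0}"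
    using assms(1) by auto
  then show ?thesis
    unfolding right_edge_slope_eq_Max using assms(2) by (subst Max_less_iff) auto
qed

lemma right_edge_slope_eqI:
  assumes "\<And>j. 0 < j \<Longrightarrow> j \<le> degree G \<Longrightarrow> coeff G j \<noteq> 0 \<Longrightarrow> newton_slope p G j \<le> c"
    and "0 < j" "j \<le> degree G" "coeff G j \<noteq> 0" "newton_slope p G j = c"
  shows "right_edge_slope p G = c"
  unfolding right_edge_slope_eq_Max by (rule Max_eqI) (use assms in auto)

lemma newton_slope_R_n2_le:
  assumes m: "m \<ge> 1" and j: "0 < j" "j \<le> degree (R_n2 (2 * m + 1))" "coeff (R_n2 (2 * m + 1)) j \<noteq> 0"
  shows "newton_slope 3 (R_n2 (2 * m + 1)) j \<le> 1 / 2 - real (multiplicity (3 :: int) (int m + 1)) / real j"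
proof -
  let ?v = "\<lambda>k. multiplicity (3 :: int) (coeff (R_n2 (2 * m + 1)) k)"
  let ?w = "multiplicity (3 :: int) (int m + 1)"
  have "even j"
  proof (rule ccontr)
    assume "odd j"
    then have "coeff (R_n2 (2 * m + 1)) j = 0"
      using m by (intro coeff_R_n2_eq_0) simp_all
    with j(3) show False
      by contradiction
  qed
  then obtain i where i: "j = 2 * i"
    by blast
  have "1 \<le> i" "i \<le> m + 1"
    using j i degree_R_n2[OF m] by simp_all
  then have "int (?v 0) - int (?v j) \<le> int i - int ?w"
    unfolding i by (rule multiplicity_3_coeff_R_n2_0_diff_le[OF m])
  then have "real_of_int (int (?v 0) - int (?v j)) \<le> real_of_int (int i - int ?w)"
    by (rule of_int_le_iff[THEN iffD2])
  then have "real (?v 0) - real (?v j) \<le> real i - real ?w"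
    by simp
  then have "newton_slope 3 (R_n2 (2 * m + 1)) j \<le> (real i - real ?w) / real j"
    unfolding newton_slope_def by (rule divide_right_mono) simp
  also have "\<dots> = 1 / 2 - real ?w / real j"
    using j(1) unfolding i by (simp add: field_simps)
  finally show ?thesis .
qed

lemma right_edge_slope_R_n2_less:
  assumes m: "m \<ge> 1" and "(3 :: int) dvd int m + 1"
  shows "right_edge_slope 3 (R_n2 (2 * m + 1)) < 1 / 2"
proof (rule right_edge_slope_less)
  show "0 < degree (R_n2 (2 * m + 1))"
    using degree_R_n2[OF m] by simp
  fix j
  assume j: "0 < j" "j \<le> degree (R_n2 (2 * m + 1))" "coeff (R_n2 (2 * m + 1)) j \<noteq> 0"
  have "multiplicity (3 :: int) (int m + 1) > 0"
    using assms(2) prime_multiplicity_gt_zero_iff[of "3 :: int" "int m + 1"] by simp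
  with j(1) have "real (multiplicity (3 :: int) (int m + 1)) / real j > 0"
    by simp
  then show "newton_slope 3 (R_n2 (2 * m + 1)) j < 1 / 2"
    using newton_slope_R_n2_le[OF m j] by linarith
qed

lemma right_edge_slope_R_n2_eq:
  assumes m: "m \<ge> 1" and "\<not> (3 :: int) dvd int m + 1"
  shows "right_edge_slope 3 (R_n2 (2 * m + 1)) = 1 / 2"
proof (rule right_edge_slope_eqI[where j = 2])
  have w: "multiplicity (3 :: int) (int m + 1) = 0"
    using assms(2) by (rule not_dvd_imp_multiplicity_0)
  show "newton_slope 3 (R_n2 (2 * m + 1)) j \<le> 1 / 2"
    if "0 < j" "j \<le> degree (R_n2 (2 * m + 1))" "coeff (R_n2 (2 * m + 1)) j \<noteq> 0" for j
    using newton_slope_R_n2_le[OF m that] w by simp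
  show "2 \<le> degree (R_n2 (2 * m + 1))"
    using degree_R_n2[OF m] by simp
  show "coeff (R_n2 (2 * m + 1)) 2 \<noteq> 0"
    using coeff_R_n2_even_neq_0[OF m, of 1] by simp
  show "newton_slope 3 (R_n2 (2 * m + 1)) 2 = 1 / 2"
    using multiplicity_3_coeff_R_n2_0_eq[OF m] w unfolding newton_slope_def by simp
qed simp

theorem mainTheorem18:
  fixes n :: nat
  assumes "n \<ge> 3" and "odd n"
  shows "(3 dvd (n + 1) \<longrightarrow> right_edge_slope 3 (R_n2 n) < 1 / 2)
       \<and> (\<not> 3 dvd (n + 1) \<longrightarrow> right_edge_slope 3 (R_n2 n) = 1 / 2)"
proof -
  obtain m where n: "n = 2 * m + 1"
    using assms(2) oddE by blast
  have m: "m \<ge> 1"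
    using assms(1) n by simp
  have "3 dvd (n + 1) \<longleftrightarrow> (3 :: int) dvd int m + 1"
    unfolding n by presburger
  then show ?thesis
    unfolding n using right_edge_slope_R_n2_less[OF m] right_edge_slope_R_n2_eq[OF m] by simp
qed

end
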